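(* Let $f:\mathbb{R}^n\to\mathbb{R}$ be twice continuously differentiable with $\nabla^2 f$ Lipschitz continuous with constant $L$. Let $x\in\mathbb{R}^n$, let $y^1,\dots,y^p\in\mathbb{R}^n$, let $v\in\mathbb{R}^n$ and $w=\nabla^2 f(x)v$, and suppose $p+n=\frac{n^2+n}{2}$. Parametrize a symmetric matrix $H=(h_{ij})$ by the vector $\alpha\in\mathbb{R}^{n(n+1)/2}$ of its entries $h_{ij}$, $i\le j$ (the coefficients of $\tfrac12 s^\top H s$ in the monomial basis $\{\tfrac12 s_i^2\}_{i}\cup\{s_is_j\}_{i<j}$). Let $M=\begin{bmatrix}M^1\\ M^2\end{bmatrix}$ be the square matrix of the linear map $\alpha\mapsto\big(\tfrac12 (y^1-x)^\top H(y^1-x),\dots,\tfrac12 (y^p-x)^\top H(y^p-x),\,Hv\big)$, where $M^1$ consists of the first $p$ rows and $M^2$ of the last $n$ rows, and let $$\delta=\begin{bmatrix}\big(f(y^\ell)-f(x)-\nabla f(x)^\top(y^\ell-x)\big)_{\ell=1,\dots,p}\\ w\end{bmatrix}.$$ Assume $M$ is nonsingular and let $H$ be the symmetric matrix whose parameter vector $\alpha$ solves $M\alpha=\delta$. Let $\Delta_y=\max_{1\le\ell\le p}\|y^\ell-x\|$ and let $\hat M=\begin{bmatrix}M^1/\Delta_y^2\\ M^2\end{bmatrix}$ (assumed nonsingular). Then $$\|H-\nabla^2 f(x)\|=\mathcal{O}(\Delta_y),$$ i.e. $\|H-\nabla^2 f(x)\|\le \kappa\,\Delta_y$ where the constant $\kappa$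 depends only on $L$, the dimensions, and $\|\hat M^{-1}\|$. (Thus $H$ together with $\nabla f(x)$ gives a fully quadratic model.)
   Context: $\mathcal{O}(A)$ denotes a constant times $A$, where the constant is independent of $A$. Norms are Euclidean (spectral for matrices). *)

theory Defs
  imports "HOL-Analysis.Analysis"
begin

text \<open>Vectors in R^n are \<open>(real,'n) vec\<close>; the index type carries a linear order so that
 the parameter vector alpha can be indexed by pairs (i,j) with i \<le> j.\<close>

definition param_idx :: "('n::{finite,linorder} \<times> 'n) set" where
  "param_idx = {(i,j). i \<le> j}"

definition params :: "('n::{finite,linorder} \<times> 'n \<Rightarrow> real) set" where
  "params = {\<alpha>. \<forall>ij. ij \<notin> param_idx \<longrightarrow> \<alpha> ij = 0}"

definition symmat :: "('n::{finite,linorder} \<times> 'n \<Rightarrow> real) \<Rightarrow> ((real,'n) vec,'n) vec" where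
  "symmat \<alpha> = (\<chi> i j. if i \<le> j then \<alpha> (i,j) else \<alpha> (j,i))"

definition param_norm :: "('n::{finite,linorder} \<times> 'n \<Rightarrow> real) \<Rightarrow> real" where
  "param_norm \<alpha> = sqrt (\<Sum>ij\<in>param_idx. (\<alpha> ij)\<^sup>2)"

definition out_space :: "nat \<Rightarrow> ((nat \<Rightarrow> real) \<times> (real,'n::finite) vec) set" where
  "out_space p = {(r,u). \<forall>l. l \<notin> {1..p} \<longrightarrow> r l = 0}"

definition out_norm :: "nat \<Rightarrow> (nat \<Rightarrow> real) \<times> (real,'n::finite) vec \<Rightarrow> real" where
  "out_norm p z = sqrt ((\<Sum>l=1..p. (fst z l)\<^sup>2) + (norm (snd z))\<^sup>2)"

definition Mmap :: "nat \<Rightarrow> (nat \<Rightarrow> (real,'n) vec) \<Rightarrow> (real,'n) vec \<Rightarrow> (real,'n) vec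
     \<Rightarrow> ('n::{finite,linorder} \<times> 'n \<Rightarrow> real) \<Rightarrow> (nat \<Rightarrow> real) \<times> (real,'n) vec" where
  "Mmap p y x v \<alpha> =
     ((\<lambda>l. if l \<in> {1..p} then (1/2) * ((y l - x) \<bullet> (symmat \<alpha> *v (y l - x))) else 0),
      symmat \<alpha> *v v)"

text \<open>Delta_y = max_l ||y^l - x|| (taken to be 0 if p = 0).\<close>
definition Delta_y :: "nat \<Rightarrow> (nat \<Rightarrow> (real,'n::finite) vec) \<Rightarrow> (real,'n) vec \<Rightarrow> real" where
  "Delta_y p y x = Max (insert 0 ((\<lambda>l. norm (y l - x)) ` {1..p}))"

definition Mhat_map :: "nat \<Rightarrow> (nat \<Rightarrow> (real,'n) vec) \<Rightarrow> (real,'n) vec \<Rightarrow> (real,'n) vec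
     \<Rightarrow> ('n::{finite,linorder} \<times> 'n \<Rightarrow> real) \<Rightarrow> (nat \<Rightarrow> real) \<times> (real,'n) vec" where
  "Mhat_map p y x v \<alpha> =
     ((\<lambda>l. fst (Mmap p y x v \<alpha>) l / (Delta_y p y x)\<^sup>2), snd (Mmap p y x v \<alpha>))"

definition nonsingular_map :: "nat \<Rightarrow> (('n::{finite,linorder} \<times> 'n \<Rightarrow> real) \<Rightarrow> (nat \<Rightarrow> real) \<times> (real,'n) vec) \<Rightarrow> bool" where
  "nonsingular_map p A \<longleftrightarrow> bij_betw A params (out_space p)"

text \<open>Spectral norm of the inverse of a nonsingular map A:
  sup_{z \<noteq> 0} ||A^{-1} z|| / ||z|| = sup_{alpha \<noteq> 0} ||alpha|| / ||A alpha||.\<close>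
definition inv_norm :: "nat \<Rightarrow> (('n::{finite,linorder} \<times> 'n \<Rightarrow> real) \<Rightarrow> (nat \<Rightarrow> real) \<times> (real,'n) vec) \<Rightarrow> real" where
  "inv_norm p A = Sup {param_norm \<alpha> / out_norm p (A \<alpha>) | \<alpha>. \<alpha> \<in> params \<and> (\<exists>ij. \<alpha> ij \<noteq> 0)}"

definition spec_norm :: "((real,'n::finite) vec,'n) vec \<Rightarrow> real" where
  "spec_norm A = onorm (\<lambda>h. A *v h)"

end

(* Let gamma be alpha minus the upper triangular entries of nabla^2 f(x), so that
   H - nabla^2 f(x) = symmat gamma once the Hessian is known to be symmetric; symmetry holds
   because, for s and t of size e, both orders of the second difference
   f(x+s+t) - f(x+s) - f(x+t) + f(x) equal a mixed second derivative at x up to O(e^3).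
   Since H v = nabla^2 f(x) v, the last block of Mhat gamma vanishes, and its first block
   consists of the second order Taylor remainders of f at the y^l divided by Delta_y^2, each
   at most (L/2) Delta_y^3 / Delta_y^2.  Hence |gamma| <= |Mhat^-1| |Mhat gamma| = O(Delta_y),
   and the spectral norm of symmat gamma is at most n^2 |gamma|. *)

theory Submission
  imports Defs
begin

section \<open>Taylor bounds for a function with Lipschitz Hessian\<close>

lemma spec_norm_nonneg: "0 \<le> spec_norm A"
  unfolding spec_norm_def by (simp add: onorm_pos_le)

lemma norm_matrix_vector_mult_le: "norm (A *v h) \<le> spec_norm A * norm h"
  unfolding spec_norm_def by (rule onorm) simp

lemma inner_matrix_vector_mult_diff_le:
  "\<bar>(A *v t) \<bullet> s - (B *v t) \<bullet> s\<bar> \<le> spec_norm (A - B) * norm t * norm s"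
proof -
  have "\<bar>(A *v t) \<bullet> s - (B *v t) \<bullet> s\<bar> = \<bar>((A - B) *v t) \<bullet> s\<bar>"
    by (simp add: matrix_vector_mult_diff_rdistrib inner_diff_left)
  also have "\<dots> \<le> norm ((A - B) *v t) * norm s"
    by (rule Cauchy_Schwarz_ineq2)
  also have "\<dots> \<le> spec_norm (A - B) * norm t * norm s"
    by (intro mult_right_mono norm_matrix_vector_mult_le) simp
  finally show ?thesis .
qed

lemma matrix_entry_eq_inner: "(A *v axis j 1) \<bullet> axis i 1 = (A :: real^'n^'m) $ i $ j"
  by (simp add: inner_axis matrix_vector_mult_basis column_def)

lemma eq_0_if_abs_le_mult_pos:
  fixes d C :: real
  assumes "\<And>e. 0 < e \<Longrightarrow> \<bar>d\<bar> \<le> C * e"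
  shows "d = 0"
proof -
  have "\<bar>d\<bar> \<le> 0 + \<epsilon>" if "\<epsilon> > 0" for \<epsilon>
  proof -
    have "\<bar>d\<bar> \<le> C * (\<epsilon> / (\<bar>C\<bar> + 1))"
      by (rule assms) (use that in \<open>simp add: add_nonneg_pos\<close>)
    also have "\<dots> \<le> \<bar>C\<bar> * (\<epsilon> / (\<bar>C\<bar> + 1))"
      using that by (intro mult_right_mono) auto
    also have "\<dots> \<le> \<epsilon>"
      using that by (simp add: field_simps)
    finally show ?thesis
      by simp
  qed
  then show ?thesis
    using field_le_epsilon[of "\<bar>d\<bar>" 0] by simp
qed

locale lipschitz_hessian =
  fixes f :: "(real,'n::finite) vec \<Rightarrow> real" and g :: "(real,'n) vec \<Rightarrow> (real,'n) vec"
    and Hf :: "(real,'n) vec \<Rightarrow> ((real,'n) vec,'n) vec" and L :: real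
  assumes has_gradient: "\<And>z. (f has_derivative (\<lambda>h. g z \<bullet> h)) (at z)"
    and has_hessian: "\<And>z. (g has_derivative (\<lambda>h. Hf z *v h)) (at z)"
    and hessian_lipschitz: "\<And>a b. spec_norm (Hf a - Hf b) \<le> L * norm (a - b)"
begin

lemma lipschitz_const_nonneg: "0 \<le> L"
proof -
  have "0 \<le> L * norm (axis i (1::real) - 0)" for i :: 'n
    using spec_norm_nonneg hessian_lipschitz by (rule order_trans)
  then show ?thesis by (simp add: zero_le_mult_iff)
qed

lemma hessian_inner_diff_le:
  "\<bar>(Hf z *v t) \<bullet> s - (Hf x *v t) \<bullet> s\<bar> \<le> L * norm (z - x) * norm t * norm s"
  using inner_matrix_vector_mult_diff_le[of "Hf z" t s "Hf x"]
    mult_right_mono[OF mult_right_mono[OF hessian_lipschitz[of z x]]]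
  by (meson norm_ge_zero order_trans)

lemma DERIV_f_along_line:
  "((\<lambda>r. f (a + r *\<^sub>R u)) has_real_derivative g (a + r *\<^sub>R u) \<bullet> u) (at r)"
proof -
  have "((\<lambda>r. f (a + r *\<^sub>R u)) has_derivative (\<lambda>h. g (a + r *\<^sub>R u) \<bullet> (h *\<^sub>R u))) (at r)"
    by (rule has_derivative_compose[OF _ has_gradient]) (auto intro!: derivative_eq_intros)
  then show ?thesis
    unfolding has_field_derivative_def by (rule has_derivative_eq_rhs) (simp add: fun_eq_iff)
qed

lemma DERIV_g_along_line:
  "((\<lambda>r. g (a + r *\<^sub>R u) \<bullet> w) has_real_derivative (Hf (a + r *\<^sub>R u) *v u) \<bullet> w) (at r)"
proof -
  have "((\<lambda>r. g (a + r *\<^sub>R u)) has_derivative (\<lambda>h. Hf (a + r *\<^sub>R u) *v (h *\<^sub>R u))) (at r)"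
    by (rule has_derivative_compose[OF _ has_hessian]) (auto intro!: derivative_eq_intros)
  then have "((\<lambda>r. g (a + r *\<^sub>R u) \<bullet> w) has_derivative (\<lambda>h. (Hf (a + r *\<^sub>R u) *v (h *\<^sub>R u)) \<bullet> w)) (at r)"
    by (auto intro!: derivative_eq_intros)
  then show ?thesis
    unfolding has_field_derivative_def
    by (rule has_derivative_eq_rhs) (simp add: fun_eq_iff matrix_vector_mult_scaleR)
qed

lemma taylor_remainder_le:
  "\<bar>f (a + u) - f a - g a \<bullet> u - (1/2) * ((Hf a *v u) \<bullet> u)\<bar> \<le> L / 2 * norm u ^ 3"
proof -
  define d :: "nat \<Rightarrow> real \<Rightarrow> real" where "d = (\<lambda>m. [\<lambda>r. f (a + r *\<^sub>R u),
     \<lambda>r. g (a + r *\<^sub>R u) \<bullet> u, \<lambda>r. (Hf (a + r *\<^sub>R u) *v u) \<bullet> u] ! m)"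
  have "\<exists>t>0. t < 1 \<and> d 0 1 = (\<Sum>m<2. d m 0 / fact m * 1 ^ m) + d 2 t / fact 2 * 1 ^ 2"
  proof (rule Maclaurin)
    show "\<forall>m t. m < 2 \<and> 0 \<le> t \<and> t \<le> 1 \<longrightarrow> (d m has_real_derivative d (Suc m) t) (at t)"
      using DERIV_f_along_line DERIV_g_along_line by (auto simp: d_def less_2_cases_iff)
  qed (simp_all add: d_def)
  then obtain t where t: "0 < t" "t < 1"
    and "f (a + u) = f a + g a \<bullet> u + (Hf (a + t *\<^sub>R u) *v u) \<bullet> u / 2"
    by (auto simp: d_def eval_nat_numeral)
  then have "\<bar>f (a + u) - f a - g a \<bullet> u - (1/2) * ((Hf a *v u) \<bullet> u)\<bar>
      = \<bar>(Hf (a + t *\<^sub>R u) *v u) \<bullet> u - (Hf a *v u) \<bullet> u\<bar> / 2"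
    by (simp add: diff_divide_distrib[symmetric] abs_divide)
  also have "\<dots> \<le> L * norm (t *\<^sub>R u) * norm u * norm u / 2"
    using hessian_inner_diff_le[of "a + t *\<^sub>R u" u u a] by simp
  also have "\<dots> \<le> L * norm u * norm u * norm u / 2"
    using t lipschitz_const_nonneg
    by (intro divide_right_mono mult_right_mono mult_left_mono) (auto simp: mult_left_le_one_le)
  also have "\<dots> = L / 2 * norm u ^ 3"
    by (simp add: power3_eq_cube)
  finally show ?thesis .
qed

lemma second_difference_mean_value:
  "\<exists>z. norm (z - x) \<le> norm s + norm t \<and>
     f (x + s + t) - f (x + s) - f (x + t) + f x = (Hf z *v t) \<bullet> s"
proof -
  have "\<exists>\<xi>>0. \<xi> < 1 \<and>
     (f (x + t + 1 *\<^sub>R s) - f (x + 1 *\<^sub>R s)) - (f (x + t + 0 *\<^sub>R s) - f (x + 0 *\<^sub>R s))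
      = (1 - 0) * (g (x + t + \<xi> *\<^sub>R s) \<bullet> s - g (x + \<xi> *\<^sub>R s) \<bullet> s)"
    by (rule MVT2) (auto intro!: DERIV_diff DERIV_f_along_line)
  then obtain \<xi> :: real where "0 < \<xi>" "\<xi> < 1" and \<xi>:
    "f (x + t + s) - f (x + s) - (f (x + t) - f x) = g (x + t + \<xi> *\<^sub>R s) \<bullet> s - g (x + \<xi> *\<^sub>R s) \<bullet> s"
    by auto
  have "\<exists>\<eta>>0. \<eta> < 1 \<and>
     g (x + \<xi> *\<^sub>R s + 1 *\<^sub>R t) \<bullet> s - g (x + \<xi> *\<^sub>R s + 0 *\<^sub>R t) \<bullet> s
      = (1 - 0) * ((Hf (x + \<xi> *\<^sub>R s + \<eta> *\<^sub>R t) *v t) \<bullet> s)"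
    by (rule MVT2) (auto intro!: DERIV_g_along_line)
  then obtain \<eta> :: real where "0 < \<eta>" "\<eta> < 1" and \<eta>:
    "g (x + \<xi> *\<^sub>R s + t) \<bullet> s - g (x + \<xi> *\<^sub>R s) \<bullet> s = (Hf (x + \<xi> *\<^sub>R s + \<eta> *\<^sub>R t) *v t) \<bullet> s"
    by auto
  have "norm (\<xi> *\<^sub>R s + \<eta> *\<^sub>R t) \<le> norm s + norm t"
    using \<open>0 < \<xi>\<close> \<open>\<xi> < 1\<close> \<open>0 < \<eta>\<close> \<open>\<eta> < 1\<close>
    by (intro norm_triangle_le add_mono) (auto simp: mult_left_le_one_le)
  with \<xi> \<eta> show ?thesis
    by (intro exI[of _ "x + \<xi> *\<^sub>R s + \<eta> *\<^sub>R t"]) (auto simp: algebra_simps)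
qed

lemma hessian_asymmetry_le:
  assumes "e > 0"
  shows "\<bar>(Hf x *v t) \<bullet> s - (Hf x *v s) \<bullet> t\<bar> \<le> 2 * L * (norm s + norm t) * norm s * norm t * e"
proof -
  have near: "\<bar>(Hf z *v b) \<bullet> a - (Hf x *v b) \<bullet> a\<bar> \<le> L * (e * (norm a + norm b)) * norm b * norm a"
    if "norm (z - x) \<le> norm (e *\<^sub>R a) + norm (e *\<^sub>R b)" for z a b
  proof -
    have "\<bar>(Hf z *v b) \<bullet> a - (Hf x *v b) \<bullet> a\<bar> \<le> L * norm (z - x) * norm b * norm a"
      by (rule hessian_inner_diff_le)
    also have "\<dots> \<le> L * (e * (norm a + norm b)) * norm b * norm a"
      using that assms lipschitz_const_nonneg
      by (intro mult_right_mono mult_left_mono) (auto simp: algebra_simps)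
    finally show ?thesis .
  qed
  obtain z1 where z1: "norm (z1 - x) \<le> norm (e *\<^sub>R s) + norm (e *\<^sub>R t)"
    "f (x + e *\<^sub>R s + e *\<^sub>R t) - f (x + e *\<^sub>R s) - f (x + e *\<^sub>R t) + f x
      = (Hf z1 *v (e *\<^sub>R t)) \<bullet> (e *\<^sub>R s)"
    using second_difference_mean_value by blast
  obtain z2 where z2: "norm (z2 - x) \<le> norm (e *\<^sub>R t) + norm (e *\<^sub>R s)"
    "f (x + e *\<^sub>R t + e *\<^sub>R s) - f (x + e *\<^sub>R t) - f (x + e *\<^sub>R s) + f x
      = (Hf z2 *v (e *\<^sub>R s)) \<bullet> (e *\<^sub>R t)"
    using second_difference_mean_value by blast
  define K where "K = L * (e * (norm s + norm t)) * norm t * norm s"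
  have "(Hf z1 *v t) \<bullet> s = (Hf z2 *v s) \<bullet> t"
    using z1(2) z2(2) assms by (simp add: matrix_vector_mult_scaleR algebra_simps)
  moreover have "\<bar>(Hf z1 *v t) \<bullet> s - (Hf x *v t) \<bullet> s\<bar> \<le> K"
    using near[OF z1(1)] by (simp add: K_def)
  moreover have "\<bar>(Hf z2 *v s) \<bullet> t - (Hf x *v s) \<bullet> t\<bar> \<le> K"
    using near[OF z2(1)] by (simp add: K_def algebra_simps)
  ultimately have "\<bar>(Hf x *v t) \<bullet> s - (Hf x *v s) \<bullet> t\<bar> \<le> 2 * K"
    by argo
  then show ?thesis
    by (simp add: K_def algebra_simps)
qed

lemma hessian_symmetric: "(Hf x *v t) \<bullet> s = (Hf x *v s) \<bullet> t"
  using eq_0_if_abs_le_mult_pos[OF hessian_asymmetry_le] by simp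

lemma hessian_entries_symmetric: "Hf x $ i $ j = Hf x $ j $ i"
  using hessian_symmetric[of x "axis j 1" "axis i 1"] by (simp add: matrix_entry_eq_inner)

end

section \<open>Inverting the interpolation map\<close>

(* Parameter vectors and outputs are plain functions, which carry no vector space structure
   here, so linearity is stated componentwise. *)
definition param_linear :: "(('a \<Rightarrow> real) \<Rightarrow> (nat \<Rightarrow> real) \<times> 'b::real_vector) \<Rightarrow> bool" where
  "param_linear A \<longleftrightarrow>
     (\<forall>\<alpha> \<beta>. A (\<lambda>ij. \<alpha> ij + \<beta> ij) = ((\<lambda>l. fst (A \<alpha>) l + fst (A \<beta>) l), snd (A \<alpha>) + snd (A \<beta>))) \<and>
     (\<forall>c \<alpha>. A (\<lambda>ij. c * \<alpha> ij) = ((\<lambda>l. c * fst (A \<alpha>) l), c *\<^sub>R snd (A \<alpha>)))"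

lemma param_linear_zero:
  assumes "param_linear A"
  shows "A (\<lambda>ij. 0) = ((\<lambda>l. 0), 0)"
proof -
  have "A (\<lambda>ij. 0 * \<alpha> ij) = ((\<lambda>l. 0 * fst (A \<alpha>) l), 0 *\<^sub>R snd (A \<alpha>))" for \<alpha>
    using assms unfolding param_linear_def by blast
  then show ?thesis
    by simp
qed

lemma param_linear_sum:
  assumes "param_linear A"
  shows "A (\<lambda>ij. \<Sum>k\<in>K. c k * a k ij) =
    ((\<lambda>l. \<Sum>k\<in>K. c k * fst (A (a k)) l), \<Sum>k\<in>K. c k *\<^sub>R snd (A (a k)))"
proof (induction K rule: infinite_finite_induct)
  case (insert k K)
  then show ?case
    using assms by (simp add: param_linear_def)
qed (simp_all add: param_linear_zero[OF assms])

lemma param_linear_scale_fst: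
  "param_linear A \<Longrightarrow> param_linear (\<lambda>\<alpha>. ((\<lambda>l. fst (A \<alpha>) l / d), snd (A \<alpha>)))"
  by (simp add: param_linear_def add_divide_distrib)

lemma symmat_add: "symmat (\<lambda>ij. \<alpha> ij + \<beta> ij) = symmat \<alpha> + symmat \<beta>"
  by (simp add: symmat_def vec_eq_iff)

lemma symmat_scale: "symmat (\<lambda>ij. c * \<alpha> ij) = c *\<^sub>R symmat \<alpha>"
  by (simp add: symmat_def vec_eq_iff)

lemma symmat_diff: "symmat (\<lambda>ij. \<alpha> ij - \<beta> ij) = symmat \<alpha> - symmat \<beta>"
  by (simp add: symmat_def vec_eq_iff)

lemma param_linear_Mmap: "param_linear (Mmap p y x v)"
  unfolding param_linear_def Mmap_def
  by (simp add: symmat_add symmat_scale matrix_vector_mult_add_rdistrib fun_eq_iff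
      scaleR_matrix_vector_assoc[symmetric] inner_add_right distrib_left)

lemma param_linear_Mhat_map: "param_linear (Mhat_map p y x v)"
  unfolding Mhat_map_def by (rule param_linear_scale_fst[OF param_linear_Mmap])

lemma out_norm_nonneg: "0 \<le> out_norm p z"
  unfolding out_norm_def by (simp add: sum_nonneg)

lemma abs_fst_le_out_norm:
  assumes "l \<in> {1..p}"
  shows "\<bar>fst z l\<bar> \<le> out_norm p z"
proof -
  have "(fst z l)\<^sup>2 \<le> (\<Sum>l=1..p. (fst z l)\<^sup>2)"
    using assms by (intro member_le_sum) auto
  also have "\<dots> \<le> (\<Sum>l=1..p. (fst z l)\<^sup>2) + (norm (snd z))\<^sup>2"
    by simp
  finally show ?thesis
    unfolding out_norm_def by (metis real_sqrt_abs real_sqrt_le_mono)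
qed

lemma abs_snd_le_out_norm: "\<bar>snd z $ i\<bar> \<le> out_norm p z"
proof -
  have "\<bar>snd z $ i\<bar>\<^sup>2 \<le> (norm (snd z))\<^sup>2"
    by (rule power_mono[OF component_le_norm_cart abs_ge_zero])
  also have "\<dots> \<le> (\<Sum>l=1..p. (fst z l)\<^sup>2) + (norm (snd z))\<^sup>2"
    by (simp add: sum_nonneg)
  finally show ?thesis
    unfolding out_norm_def by (metis power2_abs real_sqrt_abs real_sqrt_le_mono)
qed

lemma out_norm_eq_0:
  assumes "z \<in> out_space p" "out_norm p z = 0"
  shows "z = ((\<lambda>l. 0), 0)"
proof -
  have "fst z l = 0" for l
    using assms abs_fst_le_out_norm[of l p z] by (cases "l \<in> {1..p}") (auto simp: out_space_def)
  moreover have "snd z = 0"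
    using assms abs_snd_le_out_norm[of z _ p] by (auto simp: vec_eq_iff)
  ultimately show ?thesis
    by (simp add: prod_eq_iff fun_eq_iff)
qed

definition out_index :: "nat \<Rightarrow> (nat + 'n) set" where
  "out_index p = Inl ` {1..p} \<union> Inr ` UNIV"

definition out_basis :: "nat + 'n::finite \<Rightarrow> (nat \<Rightarrow> real) \<times> (real,'n) vec" where
  "out_basis = case_sum (\<lambda>l. ((\<lambda>k. if k = l then 1 else 0), 0)) (\<lambda>i. ((\<lambda>k. 0), axis i 1))"

definition out_coord :: "(nat \<Rightarrow> real) \<times> (real,'n::finite) vec \<Rightarrow> nat + 'n \<Rightarrow> real" where
  "out_coord z = case_sum (fst z) (\<lambda>i. snd z $ i)"

lemma sum_out_index:
  "(\<Sum>k\<in>out_index p. h k) = (\<Sum>l=1..p. h (Inl l)) + (\<Sum>i\<in>UNIV. h (Inr (i::'n::finite)))"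
  unfolding out_index_def by (subst sum.union_disjoint) (auto simp: sum.reindex)

lemma out_basis_in_out_space: "out_basis k \<in> out_space p" if "k \<in> out_index p"
  using that by (auto simp: out_index_def out_basis_def out_space_def)

lemma abs_out_coord_le_out_norm: "\<bar>out_coord z k\<bar> \<le> out_norm p z" if "k \<in> out_index p"
  using that by (auto simp: out_index_def out_coord_def abs_fst_le_out_norm abs_snd_le_out_norm)

lemma out_basis_expansion:
  assumes "z \<in> out_space p"
  shows "((\<lambda>l. \<Sum>k\<in>out_index p. out_coord z k * fst (out_basis k) l),
          \<Sum>k\<in>out_index p. out_coord z k *\<^sub>R snd (out_basis k)) = z"
proof -
  have "(\<Sum>k\<in>out_index p. out_coord z k * fst (out_basis k) l) = fst z l" for l
    using assms
    by (auto simp: sum_out_index out_coord_def out_basis_def out_space_def if_distrib[of "(*) _"]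
        cong: if_cong)
  moreover have "(\<Sum>k\<in>out_index p. out_coord z k *\<^sub>R snd (out_basis k)) = snd z"
    using basis_expansion[of "snd z"]
    by (simp add: sum_out_index out_coord_def out_basis_def scalar_mult_eq_scaleR)
  ultimately show ?thesis
    by (simp add: prod_eq_iff fun_eq_iff)
qed

lemma param_norm_nonneg: "0 \<le> param_norm \<alpha>"
  unfolding param_norm_def by (simp add: sum_nonneg)

lemma abs_le_param_norm:
  assumes "ij \<in> param_idx"
  shows "\<bar>\<alpha> ij\<bar> \<le> param_norm \<alpha>"
proof -
  have "(\<alpha> ij)\<^sup>2 \<le> (\<Sum>ij\<in>param_idx. (\<alpha> ij)\<^sup>2)"
    using assms by (intro member_le_sum) auto
  then show ?thesis
    unfolding param_norm_def by (metis real_sqrt_abs real_sqrt_le_mono)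
qed

lemma spec_norm_symmat_le: "spec_norm (symmat \<alpha>) \<le> real CARD('n) * real CARD('n) * param_norm \<alpha>"
  for \<alpha> :: "'n::{finite,linorder} \<times> 'n \<Rightarrow> real"
  unfolding spec_norm_def
  by (rule onorm_le_matrix_component)
    (auto simp: symmat_def param_idx_def intro!: abs_le_param_norm)

context
  fixes p :: nat and A :: "('n::{finite,linorder} \<times> 'n \<Rightarrow> real) \<Rightarrow> (nat \<Rightarrow> real) \<times> (real,'n) vec"
  assumes nonsingular: "nonsingular_map p A" and linear: "param_linear A"
begin

lemma nonsingular_map_inj_on: "inj_on A params"
  and nonsingular_map_image: "A ` params = out_space p"
  using nonsingular by (auto simp: nonsingular_map_def bij_betw_def)

lemma nonsingular_map_params_expansion:
  assumes "\<alpha> \<in> params"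
  shows "\<alpha> = (\<lambda>ij. \<Sum>k\<in>out_index p. out_coord (A \<alpha>) k * inv_into params A (out_basis k) ij)"
proof -
  have preimage: "inv_into params A (out_basis k) \<in> params"
    "A (inv_into params A (out_basis k)) = out_basis k" if "k \<in> out_index p" for k
    using out_basis_in_out_space[OF that] nonsingular_map_image by (metis inv_into_into, metis f_inv_into_f)
  have "A (\<lambda>ij. \<Sum>k\<in>out_index p. out_coord (A \<alpha>) k * inv_into params A (out_basis k) ij) = A \<alpha>"
    using out_basis_expansion[of "A \<alpha>" p] assms nonsingular_map_image preimage(2)
    by (auto simp: param_linear_sum[OF linear] cong: sum.cong)
  moreover have "(\<lambda>ij. \<Sum>k\<in>out_index p. out_coord (A \<alpha>) k * inv_into params A (out_basis k) ij) \<in> params"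
    using preimage(1) by (auto simp: params_def intro!: sum.neutral)
  ultimately show ?thesis
    using nonsingular_map_inj_on assms by (auto dest: inj_onD)
qed

lemma nonsingular_map_bounded_inverse:
  obtains C where "\<And>\<alpha>. \<alpha> \<in> params \<Longrightarrow> param_norm \<alpha> \<le> C * out_norm p (A \<alpha>)"
proof -
  define a where "a k = inv_into params A (out_basis k)" for k
  have "param_norm \<alpha> \<le> (\<Sum>ij\<in>param_idx. \<Sum>k\<in>out_index p. \<bar>a k ij\<bar>) * out_norm p (A \<alpha>)"
    if "\<alpha> \<in> params" for \<alpha>
  proof -
    have "\<bar>\<alpha> ij\<bar> \<le> out_norm p (A \<alpha>) * (\<Sum>k\<in>out_index p. \<bar>a k ij\<bar>)" for ij
    proof -
      have "\<bar>\<alpha> ij\<bar> \<le> (\<Sum>k\<in>out_index p. \<bar>out_coord (A \<alpha>) k\<bar> * \<bar>a k ij\<bar>)"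
        unfolding a_def by (subst nonsingular_map_params_expansion[OF that]) (simp add: sum_abs[THEN order_trans] abs_mult)
      also have "\<dots> \<le> (\<Sum>k\<in>out_index p. out_norm p (A \<alpha>) * \<bar>a k ij\<bar>)"
        by (intro sum_mono mult_right_mono abs_out_coord_le_out_norm) auto
      finally show ?thesis
        by (simp add: sum_distrib_left)
    qed
    then have "(\<Sum>ij\<in>param_idx. \<bar>\<alpha> ij\<bar>)
        \<le> (\<Sum>ij\<in>param_idx. out_norm p (A \<alpha>) * (\<Sum>k\<in>out_index p. \<bar>a k ij\<bar>))"
      by (intro sum_mono)
    moreover have "param_norm \<alpha> \<le> (\<Sum>ij\<in>param_idx. \<bar>\<alpha> ij\<bar>)"
      unfolding param_norm_def L2_set_def[symmetric] by (rule L2_set_le_sum_abs)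
    ultimately show ?thesis
      by (simp add: sum_distrib_left mult.commute)
  qed
  then show thesis
    by (rule that)
qed

lemma ratio_le_inv_norm:
  assumes "\<alpha> \<in> params" "\<exists>ij. \<alpha> ij \<noteq> 0"
  shows "param_norm \<alpha> / out_norm p (A \<alpha>) \<le> inv_norm p A"
proof -
  obtain C where C: "\<And>\<alpha>. \<alpha> \<in> params \<Longrightarrow> param_norm \<alpha> \<le> C * out_norm p (A \<alpha>)"
    using nonsingular_map_bounded_inverse by blast
  have "param_norm \<beta> / out_norm p (A \<beta>) \<le> \<bar>C\<bar>" if "\<beta> \<in> params" for \<beta>
  proof (cases "out_norm p (A \<beta>) = 0")
    case False
    then have "0 < out_norm p (A \<beta>)"
      using out_norm_nonneg[of p "A \<beta>"] by linarith
    then have "param_norm \<beta> / out_norm p (A \<beta>) \<le> C"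
      using C[OF that] by (simp add: divide_le_eq)
    then show ?thesis
      by linarith
  qed simp
  then have "bdd_above {param_norm \<alpha> / out_norm p (A \<alpha>) | \<alpha>. \<alpha> \<in> params \<and> (\<exists>ij. \<alpha> ij \<noteq> 0)}"
    by (auto intro!: bdd_aboveI[of _ "\<bar>C\<bar>"])
  then show ?thesis
    unfolding inv_norm_def using assms by (auto intro!: cSup_upper)
qed

lemma inv_norm_nonneg: "0 \<le> inv_norm p A"
proof -
  define \<alpha> :: "'n \<times> 'n \<Rightarrow> real" where "\<alpha> = (\<lambda>ij. if ij = (undefined, undefined) then 1 else 0)"
  have "\<alpha> \<in> params" "\<exists>ij. \<alpha> ij \<noteq> 0"
    by (auto simp: \<alpha>_def params_def param_idx_def)
  then show ?thesis
    using ratio_le_inv_norm param_norm_nonneg[of \<alpha>] out_norm_nonneg[of p "A \<alpha>"]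
    by (meson divide_nonneg_nonneg order_trans)
qed

lemma param_norm_le_inv_norm:
  assumes "\<gamma> \<in> params"
  shows "param_norm \<gamma> \<le> inv_norm p A * out_norm p (A \<gamma>)"
proof (cases "\<exists>ij. \<gamma> ij \<noteq> 0")
  case True
  have "out_norm p (A \<gamma>) \<noteq> 0"
  proof
    assume "out_norm p (A \<gamma>) = 0"
    moreover have "A \<gamma> \<in> out_space p"
      using assms nonsingular_map_image by blast
    ultimately have "A \<gamma> = A (\<lambda>ij. 0)"
      using out_norm_eq_0 param_linear_zero[OF linear] by simp
    moreover have "(\<lambda>ij. 0) \<in> params"
      by (simp add: params_def)
    ultimately have "\<gamma> = (\<lambda>ij. 0)"
      using assms nonsingular_map_inj_on by (auto dest: inj_onD)
    with True show False
      by simp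
  qed
  then have "0 < out_norm p (A \<gamma>)"
    using out_norm_nonneg[of p "A \<gamma>"] by linarith
  then show ?thesis
    using ratio_le_inv_norm[OF assms True] by (simp add: divide_le_eq)
next
  case False
  then have "\<gamma> = (\<lambda>ij. 0)"
    by auto
  then show ?thesis
    using inv_norm_nonneg by (simp add: param_norm_def out_norm_nonneg)
qed

end

section \<open>The interpolation error\<close>

definition upper_params :: "((real,'n) vec,'n) vec \<Rightarrow> 'n::{finite,linorder} \<times> 'n \<Rightarrow> real" where
  "upper_params H = (\<lambda>(i,j). if i \<le> j then H $ i $ j else 0)"

lemma upper_params_in_params: "upper_params H \<in> params"
  by (auto simp: upper_params_def params_def param_idx_def)

lemma symmat_upper_params:
  assumes "\<And>i j. H $ i $ j = H $ j $ i"
  shows "symmat (upper_params H) = H"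
  using assms by (auto simp: symmat_def upper_params_def vec_eq_iff)

lemma norm_le_Delta_y: "l \<in> {1..p} \<Longrightarrow> norm (y l - x) \<le> Delta_y p y x"
  unfolding Delta_y_def by (rule Max_ge) auto

lemma Delta_y_nonneg: "0 \<le> Delta_y p y x"
  unfolding Delta_y_def by (rule Max_ge_iff[THEN iffD2]) auto

(* For D = 0 the left-hand side is 0, since r / 0 = 0. *)
lemma abs_divide_square_le:
  fixes r c u D :: real
  assumes "0 \<le> c" "0 \<le> u" "u \<le> D" "\<bar>r\<bar> \<le> c * u ^ 3"
  shows "\<bar>r / D\<^sup>2\<bar> \<le> c * D"
proof (cases "D = 0")
  case False
  then have "0 < D"
    using assms by linarith
  have "\<bar>r\<bar> \<le> c * D ^ 3"
    using assms by (meson mult_left_mono order_trans power_mono)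
  then have "\<bar>r\<bar> / D\<^sup>2 \<le> c * D ^ 3 / D\<^sup>2"
    by (simp add: divide_right_mono)
  also have "\<dots> = c * D"
    using \<open>0 < D\<close> by (simp add: power2_eq_square power3_eq_cube)
  finally show ?thesis
    by (simp add: abs_divide)
qed (use assms in simp)

lemma out_norm_le_of_bounded_fst:
  assumes "\<And>l. l \<in> {1..p} \<Longrightarrow> \<bar>fst z l\<bar> \<le> b" "snd z = 0"
  shows "out_norm p z \<le> real p * b"
proof -
  have "out_norm p z = L2_set (fst z) {1..p}"
    using assms(2) by (simp add: out_norm_def L2_set_def)
  also have "\<dots> \<le> (\<Sum>l\<in>{1..p}. \<bar>fst z l\<bar>)"
    by (rule L2_set_le_sum_abs)
  also have "\<dots> \<le> (\<Sum>l\<in>{1..p}. b)"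
    using assms(1) by (rule sum_mono)
  finally show ?thesis
    by simp
qed

lemma Mhat_map_interpolation_error:
  fixes f :: "(real,'n::{finite,linorder}) vec \<Rightarrow> real"
  assumes "lipschitz_hessian f g Hf L"
    and interpolates: "Mmap p y x v \<alpha> =
      ((\<lambda>l. if l \<in> {1..p} then f (y l) - f x - g x \<bullet> (y l - x) else 0), Hf x *v v)"
  shows "out_norm p (Mhat_map p y x v (\<lambda>ij. \<alpha> ij - upper_params (Hf x) ij))
      \<le> real p * (L / 2 * Delta_y p y x)"
proof -
  interpret lipschitz_hessian f g Hf L by fact
  have symmat_error: "symmat (\<lambda>ij. \<alpha> ij - upper_params (Hf x) ij) = symmat \<alpha> - Hf x"
    by (simp add: symmat_diff symmat_upper_params hessian_entries_symmetric)
  show ?thesis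
  proof (rule out_norm_le_of_bounded_fst)
    fix l assume l: "l \<in> {1..p}"
    have "(1/2) * ((y l - x) \<bullet> (symmat \<alpha> *v (y l - x))) = f (y l) - f x - g x \<bullet> (y l - x)"
      using fun_cong[OF arg_cong[OF interpolates, of fst], of l] l by (simp add: Mmap_def)
    then have "fst (Mhat_map p y x v (\<lambda>ij. \<alpha> ij - upper_params (Hf x) ij)) l
        = (f (y l) - f x - g x \<bullet> (y l - x) - (1/2) * ((Hf x *v (y l - x)) \<bullet> (y l - x)))
          / (Delta_y p y x)\<^sup>2"
      using l by (simp add: Mhat_map_def Mmap_def symmat_error matrix_vector_mult_diff_rdistrib
          inner_diff_right inner_commute algebra_simps)
    also have "\<bar>\<dots>\<bar> \<le> L / 2 * Delta_y p y x"
      using taylor_remainder_le[of x "y l - x"] lipschitz_const_nonneg norm_le_Delta_y[OF l]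
      by (intro abs_divide_square_le) auto
    finally show "\<bar>fst (Mhat_map p y x v (\<lambda>ij. \<alpha> ij - upper_params (Hf x) ij)) l\<bar>
        \<le> L / 2 * Delta_y p y x" .
  next
    have "symmat \<alpha> *v v = Hf x *v v"
      using arg_cong[OF interpolates, of snd] by (simp add: Mmap_def)
    then show "snd (Mhat_map p y x v (\<lambda>ij. \<alpha> ij - upper_params (Hf x) ij)) = 0"
      by (simp add: Mhat_map_def Mmap_def symmat_error matrix_vector_mult_diff_rdistrib)
  qed
qed

lemma le_square_if_add_eq_triangular:
  fixes p n :: nat
  assumes "p + n = (n^2 + n) div 2"
  shows "p \<le> n^2"
proof -
  have "a \<le> c" if "a + b = (c + b) div 2" "b \<le> c" for a b c :: nat
    using that by presburger
  then show ?thesis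
    using assms le_square[of n] unfolding power2_eq_square by blast
qed

lemma interpolation_hessian_error_le:
  fixes f :: "(real,'n::{finite,linorder}) vec \<Rightarrow> real"
  assumes "lipschitz_hessian f g Hf L"
    and dim: "p + CARD('n) = (CARD('n)^2 + CARD('n)) div 2"
    and nonsingular: "nonsingular_map p (Mhat_map p y x v)"
    and "\<alpha> \<in> params"
    and interpolates: "Mmap p y x v \<alpha> =
      ((\<lambda>l. if l \<in> {1..p} then f (y l) - f x - g x \<bullet> (y l - x) else 0), Hf x *v v)"
  shows "spec_norm (symmat \<alpha> - Hf x)
      \<le> real CARD('n) ^ 4 * inv_norm p (Mhat_map p y x v) * L * Delta_y p y x"
proof -
  interpret lipschitz_hessian f g Hf L by fact
  define n N D where "n = real CARD('n)" and "N = inv_norm p (Mhat_map p y x v)"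
    and "D = Delta_y p y x"
  define \<gamma> where "\<gamma> = (\<lambda>ij. \<alpha> ij - upper_params (Hf x) ij)"
  have "\<gamma> \<in> params"
    using \<open>\<alpha> \<in> params\<close> upper_params_in_params by (simp add: \<gamma>_def params_def)
  have "0 \<le> N"
    unfolding N_def by (rule inv_norm_nonneg[OF nonsingular param_linear_Mhat_map])
  have "real p \<le> n ^ 2"
    using le_square_if_add_eq_triangular[OF dim] unfolding n_def by (metis of_nat_le_iff of_nat_power)
  have "spec_norm (symmat \<alpha> - Hf x) = spec_norm (symmat \<gamma>)"
    by (simp add: \<gamma>_def symmat_diff symmat_upper_params hessian_entries_symmetric)
  also have "\<dots> \<le> n * n * param_norm \<gamma>"
    unfolding n_def by (rule spec_norm_symmat_le)
  also have "\<dots> \<le> n * n * (N * out_norm p (Mhat_map p y x v \<gamma>))"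
    unfolding N_def
    by (intro mult_left_mono param_norm_le_inv_norm[OF nonsingular param_linear_Mhat_map \<open>\<gamma> \<in> params\<close>])
      (simp add: n_def)
  also have "\<dots> \<le> n * n * (N * (real p * (L / 2 * D)))"
    using Mhat_map_interpolation_error[OF \<open>lipschitz_hessian f g Hf L\<close> interpolates] \<open>0 \<le> N\<close>
    unfolding \<gamma>_def D_def by (intro mult_left_mono) (auto simp: n_def)
  also have "\<dots> \<le> n * n * (N * (n ^ 2 * (L * D)))"
    using \<open>real p \<le> n ^ 2\<close> \<open>0 \<le> N\<close> lipschitz_const_nonneg Delta_y_nonneg
    by (intro mult_left_mono mult_mono) (auto simp: n_def D_def)
  also have "\<dots> = n ^ 4 * N * L * D"
    by (simp add: power2_eq_square power4_eq_xxxx)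
  finally show ?thesis
    by (simp add: n_def N_def D_def)
qed

theorem theorem2:
  "\<exists>\<kappa> :: real \<Rightarrow> real \<Rightarrow> real.
    \<forall>(f :: (real,'n::{finite,linorder}) vec \<Rightarrow> real) (g :: (real,'n) vec \<Rightarrow> (real,'n) vec) (Hf :: (real,'n) vec \<Rightarrow> ((real,'n) vec,'n) vec)
      (L :: real) (x :: (real,'n) vec) (p :: nat) (y :: nat \<Rightarrow> (real,'n) vec) (v :: (real,'n) vec) (\<alpha> :: 'n \<times> 'n \<Rightarrow> real).
      (\<forall>z. (f has_derivative (\<lambda>h. g z \<bullet> h)) (at z)) \<and>
      (\<forall>z. (g has_derivative (\<lambda>h. Hf z *v h)) (at z)) \<and>
      continuous_on UNIV Hf \<and>
      (\<forall>a b. spec_norm (Hf a - Hf b) \<le> L * norm (a - b)) \<and>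
      p + CARD('n) = (CARD('n)^2 + CARD('n)) div 2 \<and>
      nonsingular_map p (Mmap p y x v) \<and>
      nonsingular_map p (Mhat_map p y x v) \<and>
      \<alpha> \<in> params \<and>
      Mmap p y x v \<alpha> =
        ((\<lambda>l. if l \<in> {1..p} then f (y l) - f x - g x \<bullet> (y l - x) else 0), Hf x *v v)
      \<longrightarrow> spec_norm (symmat \<alpha> - Hf x)
            \<le> \<kappa> L (inv_norm p (Mhat_map p y x v)) * Delta_y p y x"
  by (intro exI[of _ "\<lambda>L N. real CARD('n) ^ 4 * N * L"] allI impI)
    (auto intro!: interpolation_hessian_error_le simp: lipschitz_hessian_def)

end
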